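(* Let $W$ be a 1-planar graph of class $\mathcal C_1$. If $W$ has at most 8 vertices, then any $\mathcal C_1$-drawing of $W$ has at most two crossings.
   Context: All graphs are finite, simple and undirected. A drawing is 1-planar if each edge is crossed at most once (adjacent edges never cross, no edge crosses itself). For a 1-planar drawing $D$, $D^\times$ is the plane graph obtained by turning each crossing into a new degree-4 vertex (a false vertex); $N_{D^\times}(c)$ is the neighbour set of a false vertex $c$. A 1-planar graph is of class $\mathcal C_0$ if it has a 1-planar drawing with $|N_{D^\times}(c_1)\cap N_{D^\times}(c_2)|=0$ for all distinct false vertices; it is of class $\mathcal C_1$ if it is not of class $\mathcal C_0$ and it has a 1-planar drawing with $|N_{D^\times}(c_1)\cap N_{D^\times}(c_2)|\le 1$ for all distinct false vertices $c_1,c_2$. A $\mathcal C_1$-drawing is a 1-planar drawing $D$ with $|N_{D^\times}(c_1)\cap N_{D^\times}(c_2)|\le 1$ for all distinct false vertices $c_1,c_2$. *)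

theory Defs
  imports "HOL-Analysis.Analysis"
begin

definition simple_graph :: "'a set \<Rightarrow> 'a set set \<Rightarrow> bool" where
  "simple_graph V E \<longleftrightarrow> finite V \<and>
     (\<forall>e\<in>E. \<exists>u v. u \<in> V \<and> v \<in> V \<and> u \<noteq> v \<and> e = {u, v})"

definition drawing :: "'a set \<Rightarrow> 'a set set \<Rightarrow> ('a \<Rightarrow> complex) \<Rightarrow> ('a set \<Rightarrow> real \<Rightarrow> complex) \<Rightarrow> bool" where
  "drawing V E pos g \<longleftrightarrow> inj_on pos V \<and>
     (\<forall>e\<in>E. arc (g e) \<and> {pathstart (g e), pathfinish (g e)} = pos ` e \<and>
            (\<forall>v\<in>V. pos v \<notin> g e ` {0<..<1}))"

definition cross :: "'a set set \<Rightarrow> ('a set \<Rightarrow> real \<Rightarrow> complex) \<Rightarrow> 'a set \<Rightarrow> 'a set \<Rightarrow> complex \<Rightarrow> bool" where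
  "cross E g e f p \<longleftrightarrow> e \<in> E \<and> f \<in> E \<and> e \<noteq> f \<and>
     p \<in> g e ` {0<..<1} \<and> p \<in> g f ` {0<..<1}"

text \<open>1-planar drawing: each edge is crossed at most once (at most one other edge,
  at most one point), adjacent edges never cross (no edge crosses itself since arcs
  are injective).\<close>
definition one_planar_drawing :: "'a set \<Rightarrow> 'a set set \<Rightarrow> ('a \<Rightarrow> complex) \<Rightarrow> ('a set \<Rightarrow> real \<Rightarrow> complex) \<Rightarrow> bool" where
  "one_planar_drawing V E pos g \<longleftrightarrow> drawing V E pos g \<and>
     (\<forall>e f p f' p'. cross E g e f p \<and> cross E g e f' p' \<longrightarrow> f = f' \<and> p = p') \<and>
     (\<forall>e f p. cross E g e f p \<longrightarrow> e \<inter> f = {})"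

definition crossings :: "'a set set \<Rightarrow> ('a set \<Rightarrow> real \<Rightarrow> complex) \<Rightarrow> complex set" where
  "crossings E g = {p. \<exists>e f. cross E g e f p}"

text \<open>Neighbourhood of a false vertex c in D^x: the endpoints of the two edges crossing at c.\<close>
definition false_nbrs :: "'a set set \<Rightarrow> ('a set \<Rightarrow> real \<Rightarrow> complex) \<Rightarrow> complex \<Rightarrow> 'a set" where
  "false_nbrs E g c = \<Union>{e. \<exists>f. cross E g e f c}"

definition C0_drawing :: "'a set \<Rightarrow> 'a set set \<Rightarrow> ('a \<Rightarrow> complex) \<Rightarrow> ('a set \<Rightarrow> real \<Rightarrow> complex) \<Rightarrow> bool" where
  "C0_drawing V E pos g \<longleftrightarrow> one_planar_drawing V E pos g \<and>
     (\<forall>c1\<in>crossings E g. \<forall>c2\<in>crossings E g. c1 \<noteq> c2 \<longrightarrow>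
        card (false_nbrs E g c1 \<inter> false_nbrs E g c2) = 0)"

definition C1_drawing :: "'a set \<Rightarrow> 'a set set \<Rightarrow> ('a \<Rightarrow> complex) \<Rightarrow> ('a set \<Rightarrow> real \<Rightarrow> complex) \<Rightarrow> bool" where
  "C1_drawing V E pos g \<longleftrightarrow> one_planar_drawing V E pos g \<and>
     (\<forall>c1\<in>crossings E g. \<forall>c2\<in>crossings E g. c1 \<noteq> c2 \<longrightarrow>
        card (false_nbrs E g c1 \<inter> false_nbrs E g c2) \<le> 1)"

definition class_C0 :: "'a set \<Rightarrow> 'a set set \<Rightarrow> bool" where
  "class_C0 V E \<longleftrightarrow> (\<exists>pos g. C0_drawing V E pos g)"

definition class_C1 :: "'a set \<Rightarrow> 'a set set \<Rightarrow> bool" where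
  "class_C1 V E \<longleftrightarrow> \<not> class_C0 V E \<and> (\<exists>pos g. C1_drawing V E pos g)"

end

theory Submission
  imports Defs
begin

text \<open>In a 1-planar drawing the two edges crossing at a false vertex are disjoint, so a false
  vertex has four neighbours. In a \<open>\<C>\<^sub>1\<close>-drawing two false vertices share at most one
  neighbour, so by inclusion-exclusion three false vertices have at least
  \<open>3 \<cdot> 4 - 3 = 9\<close> neighbours in total, which is impossible on at most 8 vertices.\<close>

lemma simple_graph_edgeD:
  assumes "simple_graph V E" "e \<in> E"
  shows "card e = 2" "e \<subseteq> V"
proof -
  obtain u v where "u \<in> V" "v \<in> V" "u \<noteq> v" "e = {u, v}"
    using assms unfolding simple_graph_def by blast
  then show "card e = 2" "e \<subseteq> V"
    by simp_all
qed

lemma false_nbrs_subset: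
  assumes "simple_graph V E"
  shows "false_nbrs E g c \<subseteq> V"
  unfolding false_nbrs_def cross_def using simple_graph_edgeD(2)[OF assms] by blast

lemma card_false_nbrs_ge_4:
  assumes "simple_graph V E" "one_planar_drawing V E pos g" "c \<in> crossings E g"
  shows "4 \<le> card (false_nbrs E g c)"
proof -
  obtain e f where ef: "cross E g e f c"
    using assms(3) unfolding crossings_def by blast
  then have fe: "cross E g f e c" and "e \<in> E" "f \<in> E"
    unfolding cross_def by auto
  have "e \<inter> f = {}"
    using assms(2) ef unfolding one_planar_drawing_def by blast
  moreover have "card e = 2" "card f = 2"
    using simple_graph_edgeD(1)[OF assms(1)] \<open>e \<in> E\<close> \<open>f \<in> E\<close> by simp_all
  ultimately have "card (e \<union> f) = 4"
    by (simp add: card_Un_disjoint card_ge_0_finite)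
  moreover have "card (e \<union> f) \<le> card (false_nbrs E g c)"
  proof (rule card_mono)
    have "finite V"
      using assms(1) unfolding simple_graph_def by simp
    then show "finite (false_nbrs E g c)"
      using false_nbrs_subset[OF assms(1)] by (rule finite_subset[rotated])
    show "e \<union> f \<subseteq> false_nbrs E g c"
      using ef fe unfolding false_nbrs_def by blast
  qed
  ultimately show ?thesis
    by simp
qed

lemma card_add3_le_card_Un_add_card_Int:
  assumes "finite A" "finite B" "finite C"
  shows "card A + card B + card C
    \<le> card (A \<union> B \<union> C) + card (A \<inter> B) + card (A \<inter> C) + card (B \<inter> C)"
proof -
  have "card A + card (B \<union> C) = card (A \<union> (B \<union> C)) + card (A \<inter> (B \<union> C))"
    using assms by (intro card_Un_Int) simp_all
  moreover have "card B + card C = card (B \<union> C) + card (B \<inter> C)"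
    using assms by (intro card_Un_Int)
  moreover have "card (A \<inter> (B \<union> C)) \<le> card (A \<inter> B) + card (A \<inter> C)"
    unfolding Int_Un_distrib by (rule card_Un_le)
  ultimately show ?thesis
    by (simp add: Un_assoc)
qed

lemma C1_drawing_three_crossings_card_ge_9:
  assumes "simple_graph V E" "C1_drawing V E pos g"
    and "c1 \<in> crossings E g" "c2 \<in> crossings E g" "c3 \<in> crossings E g"
    and "c1 \<noteq> c2" "c1 \<noteq> c3" "c2 \<noteq> c3"
  shows "9 \<le> card V"
proof -
  define N where "N = false_nbrs E g"
  have one_planar: "one_planar_drawing V E pos g"
    and shared_le_1: "\<forall>c\<in>crossings E g. \<forall>c'\<in>crossings E g. c \<noteq> c' \<longrightarrow> card (N c \<inter> N c') \<le> 1"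
    using assms(2) unfolding C1_drawing_def N_def by simp_all
  have "finite V"
    using assms(1) unfolding simple_graph_def by simp
  have subset: "N c1 \<subseteq> V" "N c2 \<subseteq> V" "N c3 \<subseteq> V"
    using false_nbrs_subset[OF assms(1)] unfolding N_def by simp_all
  then have finite: "finite (N c1)" "finite (N c2)" "finite (N c3)"
    using finite_subset \<open>finite V\<close> by blast+
  have "card (N c1 \<union> N c2 \<union> N c3) \<le> card V"
    using subset \<open>finite V\<close> by (simp add: card_mono)
  moreover have "4 \<le> card (N c1)" "4 \<le> card (N c2)" "4 \<le> card (N c3)"
    using card_false_nbrs_ge_4[OF assms(1) one_planar] assms(3-5) unfolding N_def by simp_all
  moreover have "card (N c1 \<inter> N c2) \<le> 1" "card (N c1 \<inter> N c3) \<le> 1" "card (N c2 \<inter> N c3) \<le> 1"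
    using shared_le_1 assms(3-8) by simp_all
  ultimately show ?thesis
    using card_add3_le_card_Un_add_card_Int[OF finite] by linarith
qed

theorem lemma2:
  fixes V :: "'a set" and E :: "'a set set"
    and pos :: "'a \<Rightarrow> complex" and g :: "'a set \<Rightarrow> real \<Rightarrow> complex"
  assumes "simple_graph V E"
    and "class_C1 V E"
    and "card V \<le> 8"
    and "C1_drawing V E pos g"
  shows "card (crossings E g) \<le> 2"
proof (rule ccontr)
  assume "\<not> ?thesis"
  then have "3 \<le> card (crossings E g)"
    by simp
  then obtain T where T: "T \<subseteq> crossings E g" "card T = 3"
    by (rule obtain_subset_with_card_n)
  then obtain c1 c2 c3 where "T = {c1, c2, c3}" "c1 \<noteq> c2" "c1 \<noteq> c3" "c2 \<noteq> c3"
    unfolding card_3_iff by blast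
  with T(1) have "c1 \<in> crossings E g" "c2 \<in> crossings E g" "c3 \<in> crossings E g"
    by simp_all
  then have "9 \<le> card V"
    using C1_drawing_three_crossings_card_ge_9[OF assms(1,4)] \<open>c1 \<noteq> c2\<close> \<open>c1 \<noteq> c3\<close> \<open>c2 \<noteq> c3\<close>
    by blast
  with assms(3) show False
    by simp
qed

end
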